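(* Assume status quo bias: $f_1(x,y)\ge f_0(x,y)$ for all $x,y\in[0,1]$. Let $f(\pi)=\pi f_1(0,\pi)+(1-\pi)f_0(0,\pi)$ be a $k$-equilibrium discrete-time (resp. continuous-time) dynamics with stable equilibria $\pi^{\mathfrak e}_1\le\dots\le\pi^{\mathfrak e}_k$ and delimiting points $\delta_1,\dots,\delta_{k-1}$, and suppose that for each $i\in\{1,\dots,k\}$ there exist $r_i>0$ and $L_i\in[0,1)$ with $f'(\pi)\le L_i$ for all $\pi\in[\pi^{\mathfrak e}_i-r_i,\pi^{\mathfrak e}_i+r_i]\cap[0,1]$. Let $j$ be the initially advantaged group ($\pi_0(1|j)\ge\pi_0(1|\neg j)$) and suppose $\pi_0(1|\neg j)\neq\delta_i$ for all $i\in\{1,\dots,k-1\}$. Then applying the AA1 policy at all times reaches equality in discrete time (resp. continuous time): $|\pi_t(1|A)-\pi_t(1|B)|\to0$ as $t\to\infty$.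
   Context: Two groups $A,B$; $\neg j$ is the other group. Group $j$ has qualification profile $\pi_t(1|j)\in[0,1]$. Selection rates $\beta_t(v;j)=\tau(v;j)\pi_t(v|j)$. Dynamics: continuously differentiable $f_0,f_1:[0,1]^2\to[0,1]$; discrete time $\pi_{t+1}(1|j)=\pi_t(1|j)f_1(\beta_t(0;j),\beta_t(1;j))+(1-\pi_t(1|j))f_0(\beta_t(0;j),\beta_t(1;j))$; continuous time $\frac{d}{dt}\pi_t(1|j)=\pi_t(1|j)(f_1(\beta_t(0;j),\beta_t(1;j))-1)+(1-\pi_t(1|j))f_0(\beta_t(0;j),\beta_t(1;j))$. Under the unconstrained policy (selection rates $(0,\pi)$) each group follows $\pi_{t+1}=f(\pi_t)$ (DT) or $\dot\pi=f(\pi)-\pi$ (CT). Definition: $f$ is a $k$-equilibrium DT (resp. CT) dynamics if it is continuously differentiable and has fixed points $\pi^{\mathfrak e}_1\le\dots\le\pi^{\mathfrak e}_k$ and fixed points $\delta_i\in(\pi^{\mathfrak e}_i,\pi^{\mathfrak e}_{i+1})$, $i=1,\dots,k-1$, such that, with basins $I_1=[0,\delta_1)$, $I_i=(\delta_{i-1},\delta_i)$ for $1<i<k$, $I_k=(\delta_{k-1},1]$ (and $I_1=[0,1]$ if $k=1$), every $\pi_0\in I_i$ yields $\pi_t\to\pi^{\mathfrak e}_i$ as $t\to\infty$, where $\pi_t=f^t(\pi_0)$ (DT) or $\pi_t$ solves $\dot\pi=f(\pi)-\pi$ from $\pi_0$ (CT). Group $j$ is advantaged at $t$ if $\pi_t(1|j)\ge\pi_t(1|\neg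 j)$. AA1 w.r.t. advantaged $j$: $\tau(1;j)=\pi_t(1|\neg j)/\pi_t(1|j)$, $\tau(0;j)=0$, $\tau(1;\neg j)=1$, $\tau(0;\neg j)=0$, i.e. selection rates $\beta_t(0;\cdot)=0$, $\beta_t(1;\cdot)=\pi_t(1|\neg j)$ for both groups; "applied at all times" means w.r.t. the group advantaged at the current time. *)

theory Defs
  imports "HOL-Analysis.Analysis"
begin

definition unit_square :: "(real \<times> real) set" where
  "unit_square = {0..1} \<times> {0..1}"

definition C1_on_square :: "(real \<Rightarrow> real \<Rightarrow> real) \<Rightarrow> bool" where
  "C1_on_square g \<longleftrightarrow>
     (\<exists>D :: (real \<times> real) \<Rightarrow> ((real \<times> real) \<Rightarrow>\<^sub>L real).
        (\<forall>z\<in>unit_square. ((\<lambda>w. g (fst w) (snd w)) has_derivative blinfun_apply (D z)) (at z within unit_square))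
        \<and> continuous_on unit_square D)"

definition admissible_transition :: "(real \<Rightarrow> real \<Rightarrow> real) \<Rightarrow> bool" where
  "admissible_transition g \<longleftrightarrow>
     (\<forall>x\<in>{0..1}. \<forall>y\<in>{0..1}. g x y \<in> {0..1}) \<and> C1_on_square g"

text \<open>One-step update of a qualification profile p under selection rates (b0,b1).\<close>
definition upd :: "(real \<Rightarrow> real \<Rightarrow> real) \<Rightarrow> (real \<Rightarrow> real \<Rightarrow> real) \<Rightarrow> real \<Rightarrow> real \<Rightarrow> real \<Rightarrow> real" where
  "upd f0 f1 p b0 b1 = p * f1 b0 b1 + (1 - p) * f0 b0 b1"

definition ct_rhs :: "(real \<Rightarrow> real \<Rightarrow> real) \<Rightarrow> (real \<Rightarrow> real \<Rightarrow> real) \<Rightarrow> real \<Rightarrow> real \<Rightarrow> real \<Rightarrow> real" where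
  "ct_rhs f0 f1 p b0 b1 = p * (f1 b0 b1 - 1) + (1 - p) * f0 b0 b1"

definition fdyn :: "(real \<Rightarrow> real \<Rightarrow> real) \<Rightarrow> (real \<Rightarrow> real \<Rightarrow> real) \<Rightarrow> real \<Rightarrow> real" where
  "fdyn f0 f1 \<pi> = \<pi> * f1 0 \<pi> + (1 - \<pi>) * f0 0 \<pi>"

definition C1_on_unit :: "(real \<Rightarrow> real) \<Rightarrow> bool" where
  "C1_on_unit f \<longleftrightarrow> (\<exists>f'. (\<forall>x\<in>{0..1}. (f has_real_derivative f' x) (at x within {0..1}))
                          \<and> continuous_on {0..1} f')"

text \<open>Basin I_i (indices 1..k; delimiting points \<delta> 1 .. \<delta> (k-1)):
  I_1 = [0,\<delta>_1), I_i = (\<delta>_{i-1},\<delta>_i), I_k = (\<delta>_{k-1},1], and I_1 = [0,1] if k = 1.\<close>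
definition basin :: "nat \<Rightarrow> (nat \<Rightarrow> real) \<Rightarrow> nat \<Rightarrow> real set" where
  "basin k \<delta> i = {\<pi>\<in>{0..1}. (1 < i \<longrightarrow> \<delta> (i - 1) < \<pi>) \<and> (i < k \<longrightarrow> \<pi> < \<delta> i)}"

definition k_eq_structure :: "(real \<Rightarrow> real) \<Rightarrow> nat \<Rightarrow> (nat \<Rightarrow> real) \<Rightarrow> (nat \<Rightarrow> real) \<Rightarrow> bool" where
  "k_eq_structure f k pe \<delta> \<longleftrightarrow>
     1 \<le> k \<and> C1_on_unit f
     \<and> (\<forall>i\<in>{1..k}. pe i \<in> {0..1} \<and> f (pe i) = pe i)
     \<and> (\<forall>i\<in>{1..<k}. pe i \<le> pe (Suc i))
     \<and> (\<forall>i\<in>{1..<k}. \<delta> i \<in> {pe i<..<pe (Suc i)} \<and> f (\<delta> i) = \<delta> i)"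

definition k_equilibrium_DT :: "(real \<Rightarrow> real) \<Rightarrow> nat \<Rightarrow> (nat \<Rightarrow> real) \<Rightarrow> (nat \<Rightarrow> real) \<Rightarrow> bool" where
  "k_equilibrium_DT f k pe \<delta> \<longleftrightarrow>
     k_eq_structure f k pe \<delta>
     \<and> (\<forall>i\<in>{1..k}. \<forall>\<pi>0\<in>basin k \<delta> i. (\<lambda>t. (f ^^ t) \<pi>0) \<longlonglongrightarrow> pe i)"

definition ct_solution :: "(real \<Rightarrow> real) \<Rightarrow> real \<Rightarrow> (real \<Rightarrow> real) \<Rightarrow> bool" where
  "ct_solution f \<pi>0 p \<longleftrightarrow> p 0 = \<pi>0 \<and> (\<forall>t\<ge>0. p t \<in> {0..1}
      \<and> (p has_real_derivative (f (p t) - p t)) (at t within {0..}))"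

definition k_equilibrium_CT :: "(real \<Rightarrow> real) \<Rightarrow> nat \<Rightarrow> (nat \<Rightarrow> real) \<Rightarrow> (nat \<Rightarrow> real) \<Rightarrow> bool" where
  "k_equilibrium_CT f k pe \<delta> \<longleftrightarrow>
     k_eq_structure f k pe \<delta>
     \<and> (\<forall>i\<in>{1..k}. \<forall>\<pi>0\<in>basin k \<delta> i. \<forall>p. ct_solution f \<pi>0 p \<longrightarrow> (p \<longlongrightarrow> pe i) at_top)"

text \<open>AA1 selection rate on qualified individuals, for profiles a (group A) and b (group B):
  it equals the profile of the currently disadvantaged group (both groups get this rate,
  and rate 0 on unqualified individuals).\<close>
definition aa1_rate :: "real \<Rightarrow> real \<Rightarrow> real" where
  "aa1_rate a b = (if a \<ge> b then b else a)"

fun aa1_DT :: "(real \<Rightarrow> real \<Rightarrow> real) \<Rightarrow> (real \<Rightarrow> real \<Rightarrow> real) \<Rightarrow> real \<Rightarrow> real \<Rightarrow> nat \<Rightarrow> real \<times> real" where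
  "aa1_DT f0 f1 a0 b0 0 = (a0, b0)"
| "aa1_DT f0 f1 a0 b0 (Suc t) =
     (let (a, b) = aa1_DT f0 f1 a0 b0 t; m = aa1_rate a b
      in (upd f0 f1 a 0 m, upd f0 f1 b 0 m))"

definition aa1_CT_solution :: "(real \<Rightarrow> real \<Rightarrow> real) \<Rightarrow> (real \<Rightarrow> real \<Rightarrow> real) \<Rightarrow> real \<Rightarrow> real
    \<Rightarrow> (real \<Rightarrow> real) \<Rightarrow> (real \<Rightarrow> real) \<Rightarrow> bool" where
  "aa1_CT_solution f0 f1 a0 b0 pA pB \<longleftrightarrow> pA 0 = a0 \<and> pB 0 = b0 \<and>
     (\<forall>t\<ge>0. pA t \<in> {0..1} \<and> pB t \<in> {0..1}
       \<and> (pA has_real_derivative ct_rhs f0 f1 (pA t) 0 (aa1_rate (pA t) (pB t))) (at t within {0..})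
       \<and> (pB has_real_derivative ct_rhs f0 f1 (pB t) 0 (aa1_rate (pA t) (pB t))) (at t within {0..}))"

end

theory Submission
  imports Defs "HOL-Real_Asymp.Real_Asymp"
begin

text \<open>Under AA1 both groups receive the selection rates (0, m), where m is the smaller profile.
  The update is then affine in the profile with slope g(m) = f1(0,m) - f0(0,m), which lies in
  [0,1] by status quo bias. Hence the order of the groups is preserved, the smaller profile
  follows exactly the unconstrained dynamics f and converges to the stable equilibrium of its
  basin, and the gap between the groups is multiplied by g(m) (discrete time), resp. decays at
  rate 1 - g(m) (continuous time). At a stable equilibrium g < 1, because g = 1 would force
  f' \<ge> 1 there, against the derivative bound L < 1; by continuity of g the gap eventually
  decays geometrically, resp. exponentially.\<close>

lemma has_real_derivative_nonneg_at_min_right: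
  fixes \<phi> :: "real \<Rightarrow> real"
  assumes "(\<phi> has_real_derivative D) (at x within {a..b})" "a \<le> x" "x < b"
    and "\<forall>y\<in>{a..b}. \<phi> x \<le> \<phi> y"
  shows "D \<ge> 0"
proof -
  have "(\<phi> has_real_derivative D) (at x within {x..b})"
    using assms(1) by (rule DERIV_subset) (use assms in auto)
  then have "((\<lambda>y. (\<phi> y - \<phi> x) / (y - x)) \<longlongrightarrow> D) (at_right x)"
    using at_within_Icc_at_right[OF assms(3)] has_field_derivative_iff by metis
  moreover have "eventually (\<lambda>y. (\<phi> y - \<phi> x) / (y - x) \<ge> 0) (at_right x)"
    unfolding eventually_at_right_field using assms
    by (intro exI[of _ b]) (auto intro!: divide_nonneg_pos)
  ultimately show ?thesis
    using tendsto_lowerbound trivial_limit_at_right_real by blast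
qed

lemma has_real_derivative_nonneg_at_max_left:
  fixes \<phi> :: "real \<Rightarrow> real"
  assumes "(\<phi> has_real_derivative D) (at x within {a..b})" "a < x" "x \<le> b"
    and "\<forall>y\<in>{a..b}. \<phi> y \<le> \<phi> x"
  shows "D \<ge> 0"
proof -
  have "(\<phi> has_real_derivative D) (at x within {a..x})"
    using assms(1) by (rule DERIV_subset) (use assms in auto)
  then have "((\<lambda>y. (\<phi> y - \<phi> x) / (y - x)) \<longlongrightarrow> D) (at_left x)"
    using at_within_Icc_at_left[OF assms(2)] has_field_derivative_iff by metis
  moreover have "eventually (\<lambda>y. (\<phi> y - \<phi> x) / (y - x) \<ge> 0) (at_left x)"
    unfolding eventually_at_left_field using assms
    by (intro exI[of _ a]) (auto intro!: divide_nonpos_neg)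
  ultimately show ?thesis
    using tendsto_lowerbound trivial_limit_at_left_real by blast
qed

lemma LIMSEQ_zero_if_multiplier_tendsto_less_one:
  fixes d c :: "nat \<Rightarrow> real"
  assumes step: "\<And>n. d (Suc n) = d n * c n" and c_nonneg: "\<And>n. 0 \<le> c n"
    and c_lim: "c \<longlonglongrightarrow> l" and "l < 1"
  shows "d \<longlonglongrightarrow> 0"
proof -
  define \<theta> where "\<theta> = (1 + l) / 2"
  have "0 \<le> l" using tendsto_lowerbound[OF c_lim] c_nonneg by simp
  then have \<theta>: "l < \<theta>" "0 \<le> \<theta>" "\<theta> < 1" using \<open>l < 1\<close> by (auto simp: \<theta>_def)
  obtain N where N: "\<And>n. n \<ge> N \<Longrightarrow> c n < \<theta>"
    using order_tendstoD(2)[OF c_lim \<theta>(1)] unfolding eventually_sequentially by blast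
  have bound: "\<bar>d (n + N)\<bar> \<le> \<bar>d N\<bar> * \<theta> ^ n" for n
  proof (induction n)
    case (Suc n)
    have "\<bar>d (Suc n + N)\<bar> = \<bar>d (n + N)\<bar> * c (n + N)"
      using step[of "n + N"] c_nonneg[of "n + N"] by (simp add: abs_mult)
    also have "\<dots> \<le> \<bar>d N\<bar> * \<theta> ^ n * \<theta>"
      using Suc N[of "n + N"] c_nonneg[of "n + N"] \<theta>(2)
      by (intro mult_mono) (simp_all add: less_imp_le)
    finally show ?case by (simp add: mult_ac)
  qed simp
  have "(\<lambda>n. \<bar>d N\<bar> * \<theta> ^ n) \<longlonglongrightarrow> 0"
    using \<theta> by (intro tendsto_mult_right_zero LIMSEQ_power_zero) auto
  then have "(\<lambda>n. d (n + N)) \<longlonglongrightarrow> 0"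
    by (rule Lim_null_comparison[rotated]) (use bound in auto)
  then show ?thesis by (rule LIMSEQ_offset)
qed

lemma has_real_derivative_at_if_within_atLeast:
  fixes f :: "real \<Rightarrow> real"
  assumes "(f has_real_derivative D) (at x within {a..})" "a < x"
  shows "(f has_real_derivative D) (at x)"
proof -
  have "at x within {a..} = at x" using assms(2) by (intro at_within_interior) simp
  then show ?thesis using assms(1) by simp
qed

lemma nonneg_if_linear_ODE:
  fixes D h :: "real \<Rightarrow> real"
  assumes deriv: "\<And>t. t \<ge> 0 \<Longrightarrow> (D has_real_derivative D t * h t) (at t within {0..})"
    and h_nonpos: "\<And>t. t \<ge> 0 \<Longrightarrow> h t \<le> 0"
    and "D 0 \<ge> 0" and "t \<ge> 0"
  shows "D t \<ge> 0"
proof (rule ccontr)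
  assume neg: "\<not> D t \<ge> 0"
  have cont: "continuous_on {0..} D"
    using deriv by (intro has_derivative_continuous_on) (auto simp: has_field_derivative_def)
  define S where "S = {0..t} \<inter> D -` {0..}"
  have "closed S" unfolding S_def
    by (rule continuous_closed_preimage) (auto intro: continuous_on_subset[OF cont])
  moreover have "0 \<in> S" "bdd_above S" using assms by (auto simp: S_def bdd_above_def)
  ultimately have "Sup S \<in> S" using closed_contains_Sup by blast
  define s where "s = Sup S"
  have s: "0 \<le> s" "s \<le> t" "D s \<ge> 0" using \<open>Sup S \<in> S\<close> by (auto simp: S_def s_def)
  have after_s: "D x < 0" if "s < x" "x \<le> t" for x
  proof (rule ccontr)
    assume "\<not> D x < 0"
    then have "x \<in> S" using that s by (auto simp: S_def)
    then have "x \<le> s" unfolding s_def using \<open>bdd_above S\<close> by (rule cSup_upper)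
    then show False using that by simp
  qed
  have "D s \<le> D t"
  proof (rule DERIV_nonneg_imp_increasing_open[of s t D])
    fix x assume x: "s < x" "x < t"
    then have "(D has_real_derivative D x * h x) (at x)"
      using s by (intro has_real_derivative_at_if_within_atLeast[OF deriv]) auto
    moreover have "D x * h x \<ge> 0"
      using after_s[of x] h_nonpos[of x] x s by (intro mult_nonpos_nonpos) auto
    ultimately show "\<exists>y. (D has_real_derivative y) (at x) \<and> 0 \<le> y" by blast
  next
    show "continuous_on {s..t} D" using s by (intro continuous_on_subset[OF cont]) auto
  qed (use s in simp)
  then show False using neg s by simp
qed

lemma tendsto_zero_if_linear_ODE:
  fixes D h :: "real \<Rightarrow> real"
  assumes deriv: "\<And>t. t \<ge> 0 \<Longrightarrow> (D has_real_derivative D t * h t) (at t within {0..})"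
    and nonneg: "\<And>t. t \<ge> 0 \<Longrightarrow> D t \<ge> 0"
    and h_lim: "(h \<longlongrightarrow> l) at_top" and "l < 0"
  shows "(D \<longlongrightarrow> 0) at_top"
proof -
  define \<eta> where "\<eta> = - l / 2"
  have \<eta>: "\<eta> > 0" "l < - \<eta>" using \<open>l < 0\<close> by (auto simp: \<eta>_def)
  obtain T0 where "\<And>t. t \<ge> T0 \<Longrightarrow> h t < - \<eta>"
    using order_tendstoD(2)[OF h_lim \<eta>(2)] unfolding eventually_at_top_linorder by blast
  then obtain T where T: "T \<ge> 0" "\<And>t. t \<ge> T \<Longrightarrow> h t < - \<eta>"
    by (metis max.cobounded1 max.cobounded2 order_trans)
  define E where "E t = D t * exp (\<eta> * t)" for t
  have E_deriv: "(E has_real_derivative D t * exp (\<eta> * t) * (h t + \<eta>)) (at t within {0..})"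
    if "t \<ge> 0" for t
  proof -
    have "(E has_real_derivative D t * h t * exp (\<eta> * t) + D t * (exp (\<eta> * t) * \<eta>))
            (at t within {0..})"
      unfolding E_def by (auto intro!: derivative_eq_intros deriv[OF that])
    then show ?thesis by (simp add: algebra_simps)
  qed
  have E_cont: "continuous_on {0..} E"
    using E_deriv by (intro has_derivative_continuous_on) (auto simp: has_field_derivative_def)
  have E_le: "E t \<le> E T" if "t \<ge> T" for t
  proof (rule DERIV_nonpos_imp_decreasing_open[of T t E])
    fix x assume x: "T < x" "x < t"
    then have "(E has_real_derivative D x * exp (\<eta> * x) * (h x + \<eta>)) (at x)"
      using T by (intro has_real_derivative_at_if_within_atLeast[OF E_deriv]) auto
    moreover have "D x * exp (\<eta> * x) * (h x + \<eta>) \<le> 0"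
      using nonneg[of x] T(2)[of x] x T(1) by (intro mult_nonneg_nonpos) simp_all
    ultimately show "\<exists>y. (E has_real_derivative y) (at x) \<and> y \<le> 0" by blast
  next
    show "continuous_on {T..t} E" using T by (intro continuous_on_subset[OF E_cont]) auto
  qed (use that in simp)
  have bound: "norm (D t) \<le> E T * exp (- \<eta> * t)" if "t \<ge> T" for t
  proof -
    have "D t = E t * exp (- \<eta> * t)" by (simp add: E_def mult.assoc flip: exp_add)
    also have "\<dots> \<le> E T * exp (- \<eta> * t)" using E_le[OF that] by simp
    finally show ?thesis using nonneg[of t] that T by simp
  qed
  have "((\<lambda>t. E T * exp (- \<eta> * t)) \<longlongrightarrow> 0) at_top" using \<eta>(1) by real_asymp
  then show ?thesis
    by (rule Lim_null_comparison[rotated]) (use bound in \<open>auto simp: eventually_at_top_linorder\<close>)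
qed

lemma C1_on_square_slice_has_derivative:
  assumes "C1_on_square h" "p \<in> {0..1}"
  obtains D where "((\<lambda>y. h 0 y) has_real_derivative D) (at p within {0..1})"
proof -
  obtain Dh :: "(real \<times> real) \<Rightarrow> ((real \<times> real) \<Rightarrow>\<^sub>L real)" where
    Dh: "\<forall>z\<in>unit_square. ((\<lambda>w. h (fst w) (snd w)) has_derivative Dh z) (at z within unit_square)"
    using assms(1) unfolding C1_on_square_def by blast
  have slice: "((\<lambda>y. (0::real, y)) has_derivative (\<lambda>y. (0, y))) (at p within {0..1})"
    by (auto intro!: derivative_eq_intros)
  have into_square: "(\<lambda>y. (0::real, y)) ` {0..1} \<subseteq> unit_square" by (auto simp: unit_square_def)
  have "((\<lambda>y. h 0 y) has_derivative (\<lambda>u. Dh (0, p) (0, u))) (at p within {0..1})"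
    using has_derivative_in_compose2[OF _ into_square assms(2) slice,
        of "\<lambda>w. h (fst w) (snd w)" "\<lambda>z. blinfun_apply (Dh z)"] Dh
    by auto
  moreover have "(\<lambda>u. Dh (0, p) (0, u)) = (*) (Dh (0, p) (0, 1))"
  proof
    fix u :: real
    have "(0::real, u) = u *\<^sub>R (0, 1)" by simp
    then show "Dh (0, p) (0, u) = Dh (0, p) (0, 1) * u"
      by (metis blinfun.scaleR_right mult.commute real_scaleR_def)
  qed
  ultimately show ?thesis using that unfolding has_field_derivative_def by auto
qed

definition transition_gap :: "(real \<Rightarrow> real \<Rightarrow> real) \<Rightarrow> (real \<Rightarrow> real \<Rightarrow> real) \<Rightarrow> real \<Rightarrow> real" where
  "transition_gap f0 f1 m = f1 0 m - f0 0 m"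

lemma upd_eq_transition_gap: "upd f0 f1 p 0 m = f0 0 m + p * transition_gap f0 f1 m"
  by (simp add: upd_def transition_gap_def algebra_simps)

lemma fdyn_eq_upd: "fdyn f0 f1 p = upd f0 f1 p 0 p"
  by (simp add: fdyn_def upd_def)

lemma transition_gap_continuous:
  assumes "admissible_transition f0" "admissible_transition f1" "p \<in> {0..1}"
  shows "continuous (at p within {0..1}) (transition_gap f0 f1)"
proof -
  obtain D0 where "((\<lambda>y. f0 0 y) has_real_derivative D0) (at p within {0..1})"
    using assms by (auto simp: admissible_transition_def elim: C1_on_square_slice_has_derivative)
  moreover obtain D1 where "((\<lambda>y. f1 0 y) has_real_derivative D1) (at p within {0..1})"
    using assms by (auto simp: admissible_transition_def elim: C1_on_square_slice_has_derivative)
  ultimately show ?thesis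
    unfolding transition_gap_def[abs_def]
    by (intro continuous_diff has_derivative_continuous) (auto simp: has_field_derivative_def)
qed

text \<open>A gap of 1 at p forces f1(0,p) = 1 and f0(0,p) = 0, i.e. f1(0,.) maximal and f0(0,.)
  minimal at p; then the derivative of fdyn at p is at least 1.\<close>
lemma transition_gap_less_one:
  assumes f0_adm: "admissible_transition f0" and f1_adm: "admissible_transition f1"
    and p: "p \<in> {0..1}" and "L < 1"
    and deriv_bound: "\<And>d. (fdyn f0 f1 has_real_derivative d) (at p within {0..1}) \<Longrightarrow> d \<le> L"
  shows "transition_gap f0 f1 p < 1"
proof (rule ccontr)
  have f0_range: "\<forall>y\<in>{0..1}. f0 0 y \<in> {0..1}" and f1_range: "\<forall>y\<in>{0..1}. f1 0 y \<in> {0..1}"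
    using f0_adm f1_adm unfolding admissible_transition_def by auto
  assume "\<not> transition_gap f0 f1 p < 1"
  then have f1_p: "f1 0 p = 1" and f0_p: "f0 0 p = 0"
    using p f0_range f1_range by (fastforce simp: transition_gap_def)+
  obtain D0 where D0: "((\<lambda>y. f0 0 y) has_real_derivative D0) (at p within {0..1})"
    using f0_adm p by (auto simp: admissible_transition_def elim: C1_on_square_slice_has_derivative)
  obtain D1 where D1: "((\<lambda>y. f1 0 y) has_real_derivative D1) (at p within {0..1})"
    using f1_adm p by (auto simp: admissible_transition_def elim: C1_on_square_slice_has_derivative)
  have "(fdyn f0 f1 has_real_derivative 1 + p * D1 + (1 - p) * D0) (at p within {0..1})"
    unfolding fdyn_def[abs_def]
    by (rule derivative_eq_intros D0 D1 | simp add: f0_p f1_p)+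
  then have "1 + p * D1 + (1 - p) * D0 \<le> L" by (rule deriv_bound)
  moreover have "p * D1 \<ge> 0"
  proof (cases "p = 0")
    case False
    then show ?thesis
      using has_real_derivative_nonneg_at_max_left[OF D1] p f1_range f1_p by auto
  qed simp
  moreover have "(1 - p) * D0 \<ge> 0"
  proof (cases "p = 1")
    case False
    then show ?thesis
      using has_real_derivative_nonneg_at_min_right[OF D0] p f0_range f0_p by auto
  qed simp
  ultimately show False using \<open>L < 1\<close> by linarith
qed

lemma aa1_rate_eq_min: "aa1_rate a b = min a b"
  by (simp add: aa1_rate_def min_def)

lemma aa1_CT_solution_swap:
  "aa1_CT_solution f0 f1 a0 b0 pA pB \<Longrightarrow> aa1_CT_solution f0 f1 b0 a0 pB pA"
  by (simp add: aa1_CT_solution_def aa1_rate_eq_min min.commute)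

lemma aa1_CT_gap_has_derivative:
  assumes "aa1_CT_solution f0 f1 a0 b0 pA pB" "t \<ge> 0"
  shows "((\<lambda>t. pA t - pB t) has_real_derivative
           (pA t - pB t) * (transition_gap f0 f1 (min (pA t) (pB t)) - 1)) (at t within {0..})"
proof -
  let ?m = "aa1_rate (pA t) (pB t)"
  have "((\<lambda>t. pA t - pB t) has_real_derivative ct_rhs f0 f1 (pA t) 0 ?m - ct_rhs f0 f1 (pB t) 0 ?m)
          (at t within {0..})"
    using assms unfolding aa1_CT_solution_def by (intro DERIV_diff) auto
  then show ?thesis by (simp add: ct_rhs_def transition_gap_def aa1_rate_eq_min algebra_simps)
qed

lemma aa1_DT_Suc_eq:
  assumes "aa1_DT f0 f1 a0 b0 t = (a, b)"
  shows "aa1_DT f0 f1 a0 b0 (Suc t) = (upd f0 f1 a 0 (min a b), upd f0 f1 b 0 (min a b))"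
  using assms by (simp add: aa1_rate_eq_min Let_def)

lemma aa1_DT_gap_Suc:
  assumes "aa1_DT f0 f1 a0 b0 t = (a, b)"
  shows "fst (aa1_DT f0 f1 a0 b0 (Suc t)) - snd (aa1_DT f0 f1 a0 b0 (Suc t))
           = (a - b) * transition_gap f0 f1 (min a b)"
  unfolding aa1_DT_Suc_eq[OF assms] by (simp add: upd_eq_transition_gap algebra_simps)

locale status_quo_bias =
  fixes f0 f1 :: "real \<Rightarrow> real \<Rightarrow> real"
  assumes slice_bounds: "\<And>y. y \<in> {0..1} \<Longrightarrow> 0 \<le> f0 0 y \<and> f0 0 y \<le> f1 0 y \<and> f1 0 y \<le> 1"
begin

lemma transition_gap_bounds:
  assumes "y \<in> {0..1}"
  shows "0 \<le> transition_gap f0 f1 y" "transition_gap f0 f1 y \<le> 1"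
  using slice_bounds[OF assms] by (auto simp: transition_gap_def)

lemma upd_range:
  assumes "p \<in> {0..1}" "m \<in> {0..1}"
  shows "upd f0 f1 p 0 m \<in> {0..1}"
proof -
  have "p * transition_gap f0 f1 m \<le> transition_gap f0 f1 m"
    using assms transition_gap_bounds[OF assms(2)] by (simp add: mult_left_le_one_le)
  then show ?thesis
    using assms slice_bounds[OF assms(2)] transition_gap_bounds[OF assms(2)]
    by (simp add: upd_eq_transition_gap transition_gap_def)
qed

lemma min_upd:
  assumes "m \<in> {0..1}"
  shows "min (upd f0 f1 a 0 m) (upd f0 f1 b 0 m) = upd f0 f1 (min a b) 0 m"
proof -
  have mono: "x * transition_gap f0 f1 m \<le> y * transition_gap f0 f1 m" if "x \<le> y" for x y
    using that transition_gap_bounds[OF assms] by (intro mult_right_mono)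
  show ?thesis
    using mono[of a b] mono[of b a] by (auto simp: upd_eq_transition_gap min_def)
qed

lemma aa1_DT_range:
  assumes "a0 \<in> {0..1}" "b0 \<in> {0..1}"
  shows "aa1_DT f0 f1 a0 b0 t \<in> {0..1} \<times> {0..1}"
proof (induction t)
  case (Suc t)
  then obtain a b where ab: "aa1_DT f0 f1 a0 b0 t = (a, b)" "a \<in> {0..1}" "b \<in> {0..1}" by auto
  moreover have "min a b \<in> {0..1}" using ab by auto
  ultimately have "upd f0 f1 a 0 (min a b) \<in> {0..1}" "upd f0 f1 b 0 (min a b) \<in> {0..1}"
    using upd_range by blast+
  then show ?case unfolding aa1_DT_Suc_eq[OF ab(1)] by simp
qed (use assms in simp)

lemma min_aa1_DT_eq_fdyn_iterate:
  assumes "a0 \<in> {0..1}" "b0 \<in> {0..1}"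
  shows "case_prod min (aa1_DT f0 f1 a0 b0 t) = (fdyn f0 f1 ^^ t) (min a0 b0)"
proof (induction t)
  case (Suc t)
  obtain a b where ab: "aa1_DT f0 f1 a0 b0 t = (a, b)" by fastforce
  then have "min a b \<in> {0..1}" using aa1_DT_range[OF assms, of t] by auto
  then have "case_prod min (aa1_DT f0 f1 a0 b0 (Suc t)) = fdyn f0 f1 (min a b)"
    unfolding aa1_DT_Suc_eq[OF ab] by (simp add: min_upd fdyn_eq_upd)
  then show ?case using Suc ab by simp
qed simp

lemma aa1_DT_gap_tendsto_zero:
  assumes a0: "a0 \<in> {0..1}" and b0: "b0 \<in> {0..1}"
    and conv: "(\<lambda>t. (fdyn f0 f1 ^^ t) (min a0 b0)) \<longlonglongrightarrow> q"
    and gap_q: "transition_gap f0 f1 q < 1"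
    and gap_cont: "continuous (at q within {0..1}) (transition_gap f0 f1)"
  shows "(\<lambda>t. \<bar>fst (aa1_DT f0 f1 a0 b0 t) - snd (aa1_DT f0 f1 a0 b0 t)\<bar>) \<longlonglongrightarrow> 0"
proof -
  define m where "m t = (fdyn f0 f1 ^^ t) (min a0 b0)" for t
  have m_range: "m t \<in> {0..1}" for t
    using aa1_DT_range[OF a0 b0, of t] min_aa1_DT_eq_fdyn_iterate[OF a0 b0, of t]
    by (auto simp: m_def split: prod.splits)
  have "(\<lambda>t. fst (aa1_DT f0 f1 a0 b0 t) - snd (aa1_DT f0 f1 a0 b0 t)) \<longlonglongrightarrow> 0"
  proof (rule LIMSEQ_zero_if_multiplier_tendsto_less_one)
    fix t
    obtain a b where ab: "aa1_DT f0 f1 a0 b0 t = (a, b)" by fastforce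
    show "fst (aa1_DT f0 f1 a0 b0 (Suc t)) - snd (aa1_DT f0 f1 a0 b0 (Suc t))
            = (fst (aa1_DT f0 f1 a0 b0 t) - snd (aa1_DT f0 f1 a0 b0 t)) * transition_gap f0 f1 (m t)"
      using aa1_DT_gap_Suc[OF ab] min_aa1_DT_eq_fdyn_iterate[OF a0 b0, of t] ab
      by (simp add: m_def)
    show "0 \<le> transition_gap f0 f1 (m t)" using transition_gap_bounds m_range by blast
  next
    show "(\<lambda>t. transition_gap f0 f1 (m t)) \<longlonglongrightarrow> transition_gap f0 f1 q"
      using continuous_within_tendsto_compose[OF gap_cont _ conv] m_range by (simp add: m_def)
  qed (rule gap_q)
  then show ?thesis by (rule tendsto_rabs_zero)
qed

lemma aa1_CT_order_preserved:
  assumes sol: "aa1_CT_solution f0 f1 a0 b0 pA pB" and "b0 \<le> a0" "t \<ge> 0"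
  shows "pB t \<le> pA t"
proof -
  have gap_le: "transition_gap f0 f1 (min (pA s) (pB s)) - 1 \<le> 0" if "s \<ge> 0" for s
  proof -
    have "pA s \<in> {0..1}" "pB s \<in> {0..1}" using sol that by (simp_all add: aa1_CT_solution_def)
    then have "min (pA s) (pB s) \<in> {0..1}" by (simp add: min_def)
    then show ?thesis using transition_gap_bounds by simp
  qed
  have "pA 0 - pB 0 \<ge> 0" using sol \<open>b0 \<le> a0\<close> by (simp add: aa1_CT_solution_def)
  then have "pA t - pB t \<ge> 0"
    using nonneg_if_linear_ODE[where D = "\<lambda>t. pA t - pB t"
        and h = "\<lambda>s. transition_gap f0 f1 (min (pA s) (pB s)) - 1"]
      aa1_CT_gap_has_derivative[OF sol] gap_le \<open>t \<ge> 0\<close>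
    by blast
  then show ?thesis by simp
qed

lemma aa1_CT_lower_is_ct_solution:
  assumes sol: "aa1_CT_solution f0 f1 a0 b0 pA pB" and "b0 \<le> a0"
  shows "ct_solution (fdyn f0 f1) b0 pB"
  unfolding ct_solution_def
proof (intro conjI allI impI)
  show "pB 0 = b0" using sol by (simp add: aa1_CT_solution_def)
next
  fix t :: real assume "t \<ge> 0"
  then show "pB t \<in> {0..1}" using sol by (simp add: aa1_CT_solution_def)
next
  fix t :: real assume t: "t \<ge> 0"
  then have "min (pA t) (pB t) = pB t" using aa1_CT_order_preserved[OF assms] by simp
  then have "ct_rhs f0 f1 (pB t) 0 (aa1_rate (pA t) (pB t)) = fdyn f0 f1 (pB t) - pB t"
    by (simp add: ct_rhs_def fdyn_def aa1_rate_eq_min algebra_simps)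
  moreover have "(pB has_real_derivative ct_rhs f0 f1 (pB t) 0 (aa1_rate (pA t) (pB t)))
                   (at t within {0..})"
    using sol t by (simp add: aa1_CT_solution_def)
  ultimately show "(pB has_real_derivative fdyn f0 f1 (pB t) - pB t) (at t within {0..})" by simp
qed

lemma aa1_CT_gap_tendsto_zero_ordered:
  assumes sol: "aa1_CT_solution f0 f1 a0 b0 pA pB" and "b0 \<le> a0"
    and conv: "(pB \<longlongrightarrow> q) at_top"
    and gap_q: "transition_gap f0 f1 q < 1"
    and gap_cont: "continuous (at q within {0..1}) (transition_gap f0 f1)"
  shows "((\<lambda>t. pA t - pB t) \<longlongrightarrow> 0) at_top"
proof (rule tendsto_zero_if_linear_ODE)
  fix t :: real assume "t \<ge> 0"
  then have "min (pA t) (pB t) = pB t" using aa1_CT_order_preserved[OF sol \<open>b0 \<le> a0\<close>] by simp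
  then show "((\<lambda>t. pA t - pB t) has_real_derivative
               (pA t - pB t) * (transition_gap f0 f1 (pB t) - 1)) (at t within {0..})"
    using aa1_CT_gap_has_derivative[OF sol \<open>t \<ge> 0\<close>] by simp
  show "pA t - pB t \<ge> 0" using aa1_CT_order_preserved[OF sol \<open>b0 \<le> a0\<close> \<open>t \<ge> 0\<close>] by simp
next
  have "eventually (\<lambda>t. pB t \<in> {0..1}) at_top"
    using sol unfolding aa1_CT_solution_def eventually_at_top_linorder by blast
  then have "((\<lambda>t. transition_gap f0 f1 (pB t)) \<longlongrightarrow> transition_gap f0 f1 q) at_top"
    by (rule continuous_within_tendsto_compose[OF gap_cont _ conv])
  then show "((\<lambda>t. transition_gap f0 f1 (pB t) - 1) \<longlongrightarrow> transition_gap f0 f1 q - 1) at_top"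
    by (intro tendsto_diff tendsto_const)
qed (use gap_q in simp)

lemma aa1_CT_gap_tendsto_zero:
  assumes sol: "aa1_CT_solution f0 f1 a0 b0 pA pB"
    and conv: "\<forall>p. ct_solution (fdyn f0 f1) (min a0 b0) p \<longrightarrow> (p \<longlongrightarrow> q) at_top"
    and gap_q: "transition_gap f0 f1 q < 1"
    and gap_cont: "continuous (at q within {0..1}) (transition_gap f0 f1)"
  shows "((\<lambda>t. \<bar>pA t - pB t\<bar>) \<longlongrightarrow> 0) at_top"
proof (cases "b0 \<le> a0")
  case True
  then have "(pB \<longlongrightarrow> q) at_top"
    using conv aa1_CT_lower_is_ct_solution[OF sol] by (simp add: min_absorb2)
  then show ?thesis
    using aa1_CT_gap_tendsto_zero_ordered[OF sol True _ gap_q gap_cont] by (simp add: tendsto_rabs_zero)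
next
  case False
  note sol' = aa1_CT_solution_swap[OF sol]
  have "(pA \<longlongrightarrow> q) at_top"
    using conv aa1_CT_lower_is_ct_solution[OF sol'] False by (simp add: min_absorb1)
  then have "((\<lambda>t. pB t - pA t) \<longlongrightarrow> 0) at_top"
    using aa1_CT_gap_tendsto_zero_ordered[OF sol' _ _ gap_q gap_cont] False by simp
  then show ?thesis by (subst abs_minus_commute) (rule tendsto_rabs_zero)
qed

end

text \<open>No ordering of the delimiting points is needed: take the least index i whose right
  delimiter lies above x.\<close>
lemma basin_exists:
  assumes "1 \<le> k" "x \<in> {0..1}" "\<forall>i\<in>{1..<k}. x \<noteq> \<delta> i"
  shows "\<exists>i\<in>{1..k}. x \<in> basin k \<delta> i"
proof -
  define P where "P j \<longleftrightarrow> 1 \<le> j \<and> (j < k \<longrightarrow> x < \<delta> j)" for j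
  define i where "i = (LEAST j. P j)"
  have "P k" using assms(1) by (simp add: P_def)
  then have "P i" "i \<le> k" unfolding i_def by (auto intro: LeastI Least_le)
  have "\<delta> (i - 1) < x" if "1 < i"
  proof -
    have "\<not> P (i - 1)" unfolding i_def by (rule not_less_Least) (use that in \<open>simp add: i_def\<close>)
    then have "\<not> x < \<delta> (i - 1)" using that \<open>i \<le> k\<close> by (simp add: P_def)
    moreover have "i - 1 \<in> {1..<k}" using that \<open>i \<le> k\<close> by auto
    then have "x \<noteq> \<delta> (i - 1)" using assms(3) by blast
    ultimately show ?thesis by linarith
  qed
  then have "x \<in> basin k \<delta> i" using \<open>P i\<close> assms(2) by (simp add: basin_def P_def)
  moreover have "i \<in> {1..k}" using \<open>P i\<close> \<open>i \<le> k\<close> by (simp add: P_def)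
  ultimately show ?thesis by blast
qed

theorem mainTheorem11:
  fixes f0 f1 :: "real \<Rightarrow> real \<Rightarrow> real"
    and k :: nat and pe \<delta> r L :: "nat \<Rightarrow> real" and a0 b0 :: real
  assumes f0_adm: "admissible_transition f0"
    and f1_adm: "admissible_transition f1"
    and status_quo: "\<forall>x\<in>{0..1}. \<forall>y\<in>{0..1}. f1 x y \<ge> f0 x y"
    and r_pos: "\<forall>i\<in>{1..k}. r i > 0"
    and L_range: "\<forall>i\<in>{1..k}. 0 \<le> L i \<and> L i < 1"
    and deriv_bound: "\<forall>i\<in>{1..k}. \<forall>\<pi>\<in>{pe i - r i..pe i + r i} \<inter> {0..1}. \<forall>d.
                        (fdyn f0 f1 has_real_derivative d) (at \<pi> within {0..1}) \<longrightarrow> d \<le> L i"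
    and a0_range: "a0 \<in> {0..1}" and b0_range: "b0 \<in> {0..1}"
    and not_delim: "\<forall>i\<in>{1..<k}. aa1_rate a0 b0 \<noteq> \<delta> i"
  shows "(k_equilibrium_DT (fdyn f0 f1) k pe \<delta> \<longrightarrow>
            (\<lambda>t. \<bar>fst (aa1_DT f0 f1 a0 b0 t) - snd (aa1_DT f0 f1 a0 b0 t)\<bar>) \<longlonglongrightarrow> 0)
       \<and> (k_equilibrium_CT (fdyn f0 f1) k pe \<delta> \<longrightarrow>
            (\<forall>pA pB. aa1_CT_solution f0 f1 a0 b0 pA pB \<longrightarrow>
               ((\<lambda>t. \<bar>pA t - pB t\<bar>) \<longlongrightarrow> 0) at_top))"
proof -
  interpret status_quo_bias f0 f1
    using f0_adm f1_adm status_quo by unfold_locales (auto simp: admissible_transition_def)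
  have equilibrium: "\<exists>i\<in>{1..k}. min a0 b0 \<in> basin k \<delta> i \<and> transition_gap f0 f1 (pe i) < 1
                       \<and> continuous (at (pe i) within {0..1}) (transition_gap f0 f1)"
    if "k_eq_structure (fdyn f0 f1) k pe \<delta>"
  proof -
    have "1 \<le> k" using that by (simp add: k_eq_structure_def)
    moreover have "min a0 b0 \<in> {0..1}" using a0_range b0_range by auto
    ultimately obtain i where i: "i \<in> {1..k}" "min a0 b0 \<in> basin k \<delta> i"
      using basin_exists not_delim unfolding aa1_rate_eq_min by blast
    have "pe i \<in> {0..1}" using that i(1) by (simp add: k_eq_structure_def)
    moreover have "pe i \<in> {pe i - r i..pe i + r i}" using r_pos i(1) by (simp add: less_imp_le)
    ultimately show ?thesis
      using i L_range deriv_bound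
      by (metis IntI transition_gap_less_one transition_gap_continuous f0_adm f1_adm)
  qed
  show ?thesis
    using equilibrium aa1_DT_gap_tendsto_zero[OF a0_range b0_range] aa1_CT_gap_tendsto_zero
    unfolding k_equilibrium_DT_def k_equilibrium_CT_def by blast
qed

end
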